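(* Let $q$ be a power of an odd prime, $d\geq 2$, let $A\subset\mathbb F_q$ be nonempty, let $E=A\times A\times\cdots\times A\subset\mathbb F_q^d$ ($d$ factors), and let $F\subset\mathbb F_q^d$ be nonempty. Then $$|\Delta(E,F)|\geq \min\left\{\frac{q}{2},\ \frac{|E|^{1-\frac1d}|F|}{4q^{d-1}}\right\}.$$
   Context: $\mathbb F_q$ is the finite field with $q$ elements, of characteristic greater than two. For $m=(m_1,\dots,m_d)\in\mathbb F_q^d$ put $\|m\|=m_1^2+\dots+m_d^2\in\mathbb F_q$. For $E,F\subset\mathbb F_q^d$ the distance set is $\Delta(E,F)=\{\|x-y\|\in\mathbb F_q: x\in E,\ y\in F\}$. *)

theory Defs
  imports "HOL-Analysis.Analysis"
begin

definition ffnorm :: "'a::comm_ring_1 ^ 'n \<Rightarrow> 'a" where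
  "ffnorm m = (\<Sum>i\<in>UNIV. (m $ i)^2)"

definition dist_set :: "('a::comm_ring_1 ^ 'n) set \<Rightarrow> ('a ^ 'n) set \<Rightarrow> 'a set" where
  "dist_set E F = {ffnorm (x - y) | x y. x \<in> E \<and> y \<in> F}"

definition cube :: "'a set \<Rightarrow> ('a ^ 'n) set" where
  "cube A = {x. \<forall>i. x $ i \<in> A}"

end

theory Submission
  imports Defs
begin

text \<open>Let nu t count the pairs (x, y) in E \<times> F with ||x - y|| = t, and let f = nu - |E||F|/q.
  Cauchy-Schwarz on the support Delta(E, F) of nu gives
  |E|^2 |F|^2 \<le> |Delta(E, F)| (\<Sum> f^2 + |E|^2 |F|^2 / q), so it suffices to show
  \<Sum> f^2 \<le> 2 |F| |A|^(d+1) q^(d-1). Now \<Sum> f^2 is the sum of f ||x - y|| over E \<times> F.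
  Write x in E = A^d as a point z of the slice x_k = a0 with its k-th coordinate replaced by
  a in A; then ||x - y|| = P(z - y) + (a - y_k)^2, where P omits coordinate k. Cauchy-Schwarz
  over (y, a), averaging over translates of y along coordinate k (every value is a square at
  most twice), and the orthogonality of the functions (y, v) \<mapsto> f (P(z - y) + v) for distinct
  z in the slice give (\<Sum> f^2)^2 \<le> 2 |F| |A|^(d+1) q^(d-1) \<Sum> f^2.\<close>

lemma card_square_roots_le_2:
  fixes v :: "'a::idom"
  shows "card {s. s^2 = v} \<le> 2"
proof (cases "\<exists>r. r^2 = v")
  case True
  then obtain r where r: "r^2 = v" by blast
  have "{s. s^2 = v} \<subseteq> {r, -r}"
  proof
    fix s assume "s \<in> {s. s^2 = v}"
    then have "(s - r) * (s + r) = 0" using r by (simp add: power2_eq_square algebra_simps)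
    then show "s \<in> {r, -r}" by (auto simp: eq_neg_iff_add_eq_0)
  qed
  then have "card {s. s^2 = v} \<le> card {r, -r}" by (intro card_mono) auto
  also have "\<dots> \<le> 2" by (simp add: card_insert_if)
  finally show ?thesis .
qed simp

lemma sum_comp_square_le:
  fixes h :: "'a::{idom,finite} \<Rightarrow> real"
  assumes "\<And>v. h v \<ge> 0"
  shows "(\<Sum>s\<in>UNIV. h (s^2)) \<le> 2 * (\<Sum>v\<in>UNIV. h v)"
proof -
  have "(\<Sum>s\<in>UNIV. h (s^2)) = (\<Sum>v\<in>UNIV. \<Sum>s\<in>{s. s \<in> UNIV \<and> s^2 = v}. h (s^2))"
    by (rule sum.group[symmetric]) auto
  also have "\<dots> = (\<Sum>v\<in>UNIV. real (card {s. s^2 = v}) * h v)"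
    by (intro sum.cong) auto
  also have "\<dots> \<le> (\<Sum>v\<in>UNIV. 2 * h v)"
    by (intro sum_mono mult_right_mono) (use card_square_roots_le_2 assms in auto)
  finally show ?thesis by (simp add: sum_distrib_left)
qed

text \<open>A map moving affinely along some direction takes every value equally often.\<close>

lemma sum_comp_affine_along:
  fixes D :: "'v::{ab_group_add,finite} \<Rightarrow> 'a::{field,finite}" and \<phi> :: "'a \<Rightarrow> 'b::comm_semiring_1"
  assumes "g \<noteq> 0" and shift: "\<And>y s. D (y + u s) = D y + s * g"
  shows "of_nat CARD('a) * (\<Sum>y\<in>UNIV. \<phi> (D y)) = of_nat CARD('v) * (\<Sum>t\<in>UNIV. \<phi> t)"
proof -
  have line: "(\<Sum>s\<in>UNIV. \<phi> (c + s * g)) = (\<Sum>t\<in>UNIV. \<phi> t)" for c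
  proof -
    have "bij (\<lambda>s. c + s * g)"
      by (rule bij_betwI[where g="\<lambda>t. (t - c) / g"]) (use \<open>g \<noteq> 0\<close> in auto)
    then show ?thesis by (rule sum.reindex_bij_betw)
  qed
  have "(\<Sum>y\<in>UNIV. \<phi> (D y)) = (\<Sum>y\<in>UNIV. \<phi> (D y + s * g))" for s
    using sum.reindex_bij_betw[OF bij_plus_right, of "\<lambda>y. \<phi> (D y)" "u s"] by (simp add: shift)
  then have "of_nat CARD('a) * (\<Sum>y\<in>UNIV. \<phi> (D y)) = (\<Sum>s\<in>UNIV. \<Sum>y\<in>UNIV. \<phi> (D y + s * g))"
    by simp
  also have "\<dots> = (\<Sum>y\<in>UNIV. \<Sum>s\<in>UNIV. \<phi> (D y + s * g))"
    by (rule sum.swap)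
  also have "\<dots> = of_nat CARD('v) * (\<Sum>t\<in>UNIV. \<phi> t)"
    by (simp add: line)
  finally show ?thesis .
qed

lemma sum_at_square_offset_le:
  fixes H :: "'a::{field,finite}^'n \<Rightarrow> 'a \<Rightarrow> real"
  assumes shift: "\<And>y s v. H (y + axis k s) v = H y v" and nonneg: "\<And>y v. H y v \<ge> 0"
  shows "real CARD('a) * (\<Sum>y\<in>UNIV. H y ((a - y$k)^2)) \<le> 2 * (\<Sum>y\<in>UNIV. \<Sum>v\<in>UNIV. H y v)"
proof -
  have "(\<Sum>y\<in>UNIV. H y ((a - y$k)^2)) = (\<Sum>y\<in>UNIV. H y ((a - y$k - s)^2))" for s
    using sum.reindex_bij_betw[OF bij_plus_right, of "\<lambda>y. H y ((a - y$k)^2)" "axis k s"]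
    by (simp add: shift algebra_simps)
  then have "real CARD('a) * (\<Sum>y\<in>UNIV. H y ((a - y$k)^2))
      = (\<Sum>s\<in>UNIV. \<Sum>y\<in>UNIV. H y ((a - y$k - s)^2))"
    by simp
  also have "\<dots> = (\<Sum>y\<in>UNIV. \<Sum>s\<in>UNIV. H y ((a - y$k - s)^2))"
    by (rule sum.swap)
  also have "\<dots> \<le> (\<Sum>y\<in>UNIV. 2 * (\<Sum>v\<in>UNIV. H y v))"
  proof (rule sum_mono)
    fix y
    have "(\<Sum>s\<in>UNIV. H y ((a - y$k - s)^2)) = (\<Sum>s\<in>UNIV. H y (s^2))"
      by (rule sum.reindex_bij_betw[OF bij_diff, of "\<lambda>s. H y (s^2)"])
    also have "\<dots> \<le> 2 * (\<Sum>v\<in>UNIV. H y v)"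
      by (rule sum_comp_square_le) (rule nonneg)
    finally show "(\<Sum>s\<in>UNIV. H y ((a - y$k - s)^2)) \<le> 2 * (\<Sum>v\<in>UNIV. H y v)" .
  qed
  finally show ?thesis by (simp add: sum_distrib_left)
qed

lemma card_cube: "card (cube A :: ('a::finite^'n::finite) set) = card A ^ CARD('n)"
proof -
  have "bij_betw vec_lambda (PiE UNIV (\<lambda>_::'n. A)) (cube A)"
    by (rule bij_betwI[where g=vec_nth]) (auto simp: cube_def)
  from bij_betw_same_card[OF this] show ?thesis by (simp add: card_PiE)
qed

definition vec_upd :: "'a^'n \<Rightarrow> 'n \<Rightarrow> 'a \<Rightarrow> 'a^'n" where
  "vec_upd x k a = (\<chi> i. if i = k then a else x $ i)"

lemma bij_betw_cube_slice_times:
  assumes "a0 \<in> A"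
  shows "bij_betw (\<lambda>(z, a). vec_upd z k a) ({x \<in> cube A. x $ k = a0} \<times> A) (cube A)"
  by (rule bij_betwI[where g="\<lambda>x. (vec_upd x k a0, x $ k)"])
    (use assms in \<open>auto simp: cube_def vec_upd_def vec_eq_iff\<close>)

lemma card_cube_slice:
  assumes "a0 \<in> A"
  shows "card {x \<in> cube A :: ('a::finite^'n::finite) set. x $ k = a0} = card A ^ (CARD('n) - 1)"
proof -
  have "card {x \<in> cube A :: ('a^'n) set. x $ k = a0} * card A = card A ^ (CARD('n) - 1) * card A"
    using bij_betw_same_card[OF bij_betw_cube_slice_times[OF assms, of k]]
    by (simp add: card_cartesian_product card_cube flip: power_Suc2)
  then show ?thesis using assms by (auto simp: card_gt_0_iff)
qed

definition ffnorm_except :: "'n::finite \<Rightarrow> 'a::comm_ring_1^'n \<Rightarrow> 'a" where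
  "ffnorm_except k m = (\<Sum>i\<in>UNIV - {k}. (m $ i)^2)"

lemma ffnorm_vec_upd_diff:
  "ffnorm (vec_upd z k a - y) = ffnorm_except k (z - y) + (a - y $ k)^2"
proof -
  have "ffnorm (vec_upd z k a - y) = ((vec_upd z k a - y) $ k)^2 + (\<Sum>i\<in>UNIV - {k}. ((vec_upd z k a - y) $ i)^2)"
    unfolding ffnorm_def by (rule sum.remove) auto
  also have "(\<Sum>i\<in>UNIV - {k}. ((vec_upd z k a - y) $ i)^2) = ffnorm_except k (z - y)"
    unfolding ffnorm_except_def by (intro sum.cong) (auto simp: vec_upd_def)
  finally show ?thesis by (simp add: vec_upd_def add.commute)
qed

lemma ffnorm_except_diff_add_axis_same:
  "ffnorm_except k (z - (y + axis k s)) = ffnorm_except k (z - y)"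
  unfolding ffnorm_except_def by (intro sum.cong) (auto simp: axis_def)

lemma ffnorm_except_diff_add_axis_other:
  assumes "j \<noteq> k"
  shows "ffnorm_except k (z - (y + axis j s)) = ffnorm_except k (z - y) + s^2 - 2 * s * (z $ j - y $ j)"
proof -
  have "ffnorm_except k (z - (y + axis j s))
      = (\<Sum>i\<in>UNIV - {k}. (z $ i - y $ i)^2 + (if i = j then s^2 - 2 * s * (z $ j - y $ j) else 0))"
    unfolding ffnorm_except_def by (intro sum.cong) (auto simp: axis_def power2_eq_square algebra_simps)
  then show ?thesis
    using assms by (simp add: sum.distrib ffnorm_except_def)
qed

lemma sum_ffnorm_except_correlation:
  fixes f :: "'a::{field,finite} \<Rightarrow> real" and z w :: "'a^'n::finite"
  assumes two: "(2::'a) \<noteq> 0" and f0: "sum f UNIV = 0" and zw: "z $ k = w $ k"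
  shows "(\<Sum>y\<in>UNIV. \<Sum>v\<in>UNIV. f (ffnorm_except k (z - y) + v) * f (ffnorm_except k (w - y) + v))
       = (if z = w then real CARD('a^'n) * (\<Sum>v\<in>UNIV. (f v)^2) else 0)"
proof -
  define R where "R \<delta> = (\<Sum>v\<in>UNIV. f v * f (v + \<delta>))" for \<delta>
  have translate: "(\<Sum>v\<in>UNIV. f (c + v) * f (c' + v)) = R (c' - c)" for c c'
    using sum.reindex_bij_betw[OF bij_plus_right, of "\<lambda>v. f v * f (v + (c' - c))" c]
    by (simp add: R_def algebra_simps)
  show ?thesis
  proof (cases "z = w")
    case True
    then show ?thesis by (simp add: translate R_def power2_eq_square)
  next
    case False
    txt \<open>The difference D of the two partial norms is affine along a coordinate j where z and w
      differ, hence equidistributed, and the correlations R sum to (\<Sum> f)^2 = 0.\<close>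
    then obtain j where j: "z $ j \<noteq> w $ j" by (auto simp: vec_eq_iff)
    with zw have "j \<noteq> k" by auto
    define D where "D y = ffnorm_except k (w - y) - ffnorm_except k (z - y)" for y
    have "2 * (z $ j - w $ j) \<noteq> 0" using two j by simp
    moreover have "D (y + axis j s) = D y + s * (2 * (z $ j - w $ j))" for y s
      unfolding D_def ffnorm_except_diff_add_axis_other[OF \<open>j \<noteq> k\<close>] by (simp add: algebra_simps)
    ultimately have "real CARD('a) * (\<Sum>y\<in>UNIV. R (D y)) = real CARD('a^'n) * (\<Sum>\<delta>\<in>UNIV. R \<delta>)"
      by (rule sum_comp_affine_along)
    moreover have "(\<Sum>\<delta>\<in>UNIV. R \<delta>) = (\<Sum>v\<in>UNIV. f v * (\<Sum>\<delta>\<in>UNIV. f (v + \<delta>)))"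
      unfolding R_def by (subst sum.swap) (simp add: sum_distrib_left)
    moreover have "(\<Sum>\<delta>\<in>UNIV. f (v + \<delta>)) = 0" for v
      using sum.reindex_bij_betw[OF bij_plus, of f v] f0 by simp
    ultimately show ?thesis using False by (simp add: translate D_def)
  qed
qed

lemma sum_square_sum_ffnorm_except:
  fixes f :: "'a::{field,finite} \<Rightarrow> real" and Z :: "('a^'n::finite) set"
  assumes two: "(2::'a) \<noteq> 0" and f0: "sum f UNIV = 0" and Z: "\<And>z w. z \<in> Z \<Longrightarrow> w \<in> Z \<Longrightarrow> z $ k = w $ k"
  shows "(\<Sum>y\<in>UNIV. \<Sum>v\<in>UNIV. (\<Sum>z\<in>Z. f (ffnorm_except k (z - y) + v))^2)
       = real (card Z) * real CARD('a^'n) * (\<Sum>v\<in>UNIV. (f v)^2)"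
proof -
  define \<phi> where "\<phi> z w y v = f (ffnorm_except k (z - y) + v) * f (ffnorm_except k (w - y) + v)" for z w y v
  have "(\<Sum>y\<in>UNIV. \<Sum>v\<in>UNIV. (\<Sum>z\<in>Z. f (ffnorm_except k (z - y) + v))^2)
      = (\<Sum>y\<in>UNIV. \<Sum>v\<in>UNIV. \<Sum>z\<in>Z. \<Sum>w\<in>Z. \<phi> z w y v)"
    by (simp add: \<phi>_def power2_eq_square sum_product)
  also have "\<dots> = (\<Sum>y\<in>UNIV. \<Sum>z\<in>Z. \<Sum>w\<in>Z. \<Sum>v\<in>UNIV. \<phi> z w y v)"
    by (intro sum.cong refl, subst sum.swap) (intro sum.cong refl sum.swap)
  also have "\<dots> = (\<Sum>z\<in>Z. \<Sum>w\<in>Z. \<Sum>y\<in>UNIV. \<Sum>v\<in>UNIV. \<phi> z w y v)"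
    by (subst sum.swap) (intro sum.cong refl sum.swap)
  also have "\<dots> = (\<Sum>z\<in>Z. \<Sum>w\<in>Z. if z = w then real CARD('a^'n) * (\<Sum>v\<in>UNIV. (f v)^2) else 0)"
    unfolding \<phi>_def by (intro sum.cong refl sum_ffnorm_except_correlation[OF two f0 Z])
  finally show ?thesis by (simp add: sum.delta)
qed

lemma sum_ffnorm_cube_square_le:
  fixes A :: "'a::{field,finite} set" and F :: "('a^'n::finite) set" and f :: "'a \<Rightarrow> real"
  assumes two: "(2::'a) \<noteq> 0" and "A \<noteq> {}" and f0: "sum f UNIV = 0"
  shows "(\<Sum>x\<in>cube A. \<Sum>y\<in>F. f (ffnorm (x - y)))^2
       \<le> 2 * real (card F) * real (card A) ^ (CARD('n) + 1) * real CARD('a) ^ (CARD('n) - 1)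
           * (\<Sum>v\<in>UNIV. (f v)^2)"
proof -
  fix k :: 'n
  obtain a0 where "a0 \<in> A" using \<open>A \<noteq> {}\<close> by blast
  define Z where "Z = {x \<in> cube A :: ('a^'n) set. x $ k = a0}"
  define G where "G y v = (\<Sum>z\<in>Z. f (ffnorm_except k (z - y) + v))" for y v
  define W where "W = real (card Z) * real CARD('a^'n) * (\<Sum>v\<in>UNIV. (f v)^2)"
  have "(\<Sum>x\<in>cube A. \<Sum>y\<in>F. f (ffnorm (x - y)))
      = (\<Sum>(z, a)\<in>Z \<times> A. \<Sum>y\<in>F. f (ffnorm (vec_upd z k a - y)))"
    using sum.reindex_bij_betw[OF bij_betw_cube_slice_times[OF \<open>a0 \<in> A\<close>, of k],
        of "\<lambda>x. \<Sum>y\<in>F. f (ffnorm (x - y))"]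
    by (simp add: Z_def case_prod_unfold)
  also have "\<dots> = (\<Sum>(y, a)\<in>F \<times> A. G y ((a - y $ k)^2))"
    by (simp add: G_def ffnorm_vec_upd_diff sum.cartesian_product[symmetric] sum.swap[of _ F]
        sum.swap[of _ A Z])
  finally have split: "(\<Sum>x\<in>cube A. \<Sum>y\<in>F. f (ffnorm (x - y))) = (\<Sum>(y, a)\<in>F \<times> A. G y ((a - y $ k)^2))" .
  have "(\<Sum>(y, a)\<in>F \<times> A. (G y ((a - y $ k)^2))^2) \<le> (\<Sum>a\<in>A. \<Sum>y\<in>UNIV. (G y ((a - y $ k)^2))^2)"
    unfolding sum.cartesian_product[symmetric] by (subst sum.swap) (intro sum_mono sum_mono2; simp)
  also have "\<dots> \<le> (\<Sum>a\<in>A. 2 * W / real CARD('a))"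
  proof (rule sum_mono)
    fix a
    have "real CARD('a) * (\<Sum>y\<in>UNIV. (G y ((a - y $ k)^2))^2) \<le> 2 * (\<Sum>y\<in>UNIV. \<Sum>v\<in>UNIV. (G y v)^2)"
      by (rule sum_at_square_offset_le) (simp_all add: G_def ffnorm_except_diff_add_axis_same)
    also have "(\<Sum>y\<in>UNIV. \<Sum>v\<in>UNIV. (G y v)^2) = W"
      unfolding G_def W_def by (rule sum_square_sum_ffnorm_except[OF two f0]) (simp add: Z_def)
    finally show "(\<Sum>y\<in>UNIV. (G y ((a - y $ k)^2))^2) \<le> 2 * W / real CARD('a)"
      by (simp add: field_simps)
  qed
  finally have offset: "(\<Sum>(y, a)\<in>F \<times> A. (G y ((a - y $ k)^2))^2) \<le> real (card A) * (2 * W / real CARD('a))"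
    by simp
  have "(\<Sum>x\<in>cube A. \<Sum>y\<in>F. f (ffnorm (x - y)))^2
      \<le> (\<Sum>(y, a)\<in>F \<times> A. (G y ((a - y $ k)^2))^2) * real (card (F \<times> A))"
    unfolding split
    using sum_squared_le_sum_of_squares[of "\<lambda>p. G (fst p) ((snd p - fst p $ k)^2)" "F \<times> A"]
    by (simp add: case_prod_unfold)
  also have "\<dots> \<le> real (card A) * (2 * W / real CARD('a)) * real (card (F \<times> A))"
    using offset by (rule mult_right_mono) simp
  also have "\<dots> = 2 * real (card F) * real (card A) ^ (CARD('n) + 1) * real CARD('a) ^ (CARD('n) - 1)
          * (\<Sum>v\<in>UNIV. (f v)^2)"
  proof -
    obtain e where e: "CARD('n) = Suc e"
      using not0_implies_Suc by fastforce
    show ?thesis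
      using card_cube_slice[OF \<open>a0 \<in> A\<close>, of k]
      by (simp add: e W_def Z_def card_cartesian_product power2_eq_square algebra_simps)
  qed
  finally show ?thesis .
qed

definition dist_count :: "('a::comm_ring_1^'n) set \<Rightarrow> ('a^'n) set \<Rightarrow> 'a \<Rightarrow> nat" where
  "dist_count E F t = card {p \<in> E \<times> F. ffnorm (fst p - snd p) = t}"

lemma dist_count_eq_0: "t \<notin> dist_set E F \<Longrightarrow> dist_count E F t = 0"
  unfolding dist_count_def dist_set_def by (auto simp: card_eq_0_iff)

lemma sum_ffnorm_eq_sum_dist_count:
  fixes E F :: "('a::{comm_ring_1,finite}^'n::finite) set" and h :: "'a \<Rightarrow> 'b::comm_semiring_1"
  shows "(\<Sum>x\<in>E. \<Sum>y\<in>F. h (ffnorm (x - y))) = (\<Sum>t\<in>UNIV. of_nat (dist_count E F t) * h t)"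
proof -
  have "(\<Sum>x\<in>E. \<Sum>y\<in>F. h (ffnorm (x - y))) = (\<Sum>p\<in>E \<times> F. h (ffnorm (fst p - snd p)))"
    by (simp add: sum.cartesian_product case_prod_unfold)
  also have "\<dots> = (\<Sum>t\<in>UNIV. \<Sum>p\<in>{p. p \<in> E \<times> F \<and> ffnorm (fst p - snd p) = t}. h (ffnorm (fst p - snd p)))"
    by (rule sum.group[symmetric]) auto
  also have "\<dots> = (\<Sum>t\<in>UNIV. of_nat (dist_count E F t) * h t)"
    unfolding dist_count_def by (intro sum.cong) auto
  finally show ?thesis .
qed

lemma sum_dist_count: "(\<Sum>t\<in>UNIV. dist_count E F t) = card E * card F"
  for E F :: "('a::{comm_ring_1,finite}^'n::finite) set"
proof -
  have "(\<Sum>t\<in>UNIV. of_nat (dist_count E F t) * 1) = (\<Sum>x\<in>E. \<Sum>y\<in>F. (1::nat))"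
    by (rule sum_ffnorm_eq_sum_dist_count[symmetric])
  then show ?thesis by simp
qed

lemma dist_count_variance_le:
  fixes A :: "'a::{field,finite} set" and F :: "('a^'n::finite) set"
  assumes two: "(2::'a) \<noteq> 0" and "A \<noteq> {}"
  defines "m \<equiv> real (card (cube A :: ('a^'n) set) * card F) / real CARD('a)"
  shows "(\<Sum>t\<in>UNIV. (real (dist_count (cube A) F t) - m)^2)
       \<le> 2 * real (card F) * real (card A) ^ (CARD('n) + 1) * real CARD('a) ^ (CARD('n) - 1)"
    (is "?V \<le> ?K")
proof -
  define f where "f t = real (dist_count (cube A :: ('a^'n) set) F t) - m" for t
  have "sum f UNIV = real (\<Sum>t\<in>UNIV. dist_count (cube A :: ('a^'n) set) F t) - real CARD('a) * m"
    by (simp add: f_def sum_subtractf)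
  then have f0: "sum f UNIV = 0"
    by (simp add: sum_dist_count m_def)
  have "(\<Sum>x\<in>cube A. \<Sum>y\<in>F. f (ffnorm (x - y))) = (\<Sum>t\<in>UNIV. (f t + m) * f t)"
    unfolding sum_ffnorm_eq_sum_dist_count by (simp add: f_def)
  also have "\<dots> = (\<Sum>t\<in>UNIV. (f t)^2) + m * sum f UNIV"
    by (simp add: algebra_simps power2_eq_square sum.distrib sum_distrib_left)
  also have "\<dots> = ?V"
    using f0 by (simp add: f_def)
  finally have "?V^2 \<le> ?K * ?V"
    using sum_ffnorm_cube_square_le[OF two \<open>A \<noteq> {}\<close> f0, of F] by (simp add: f_def)
  moreover have "?V \<ge> 0" "?K \<ge> 0" by (simp_all add: sum_nonneg)
  ultimately show ?thesis
    by (cases "?V = 0") (auto simp: power2_eq_square)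
qed

lemma card_support_ge:
  fixes \<nu> :: "'a::finite \<Rightarrow> real"
  assumes support: "\<And>t. t \<notin> T \<Longrightarrow> \<nu> t = 0"
    and variance: "(\<Sum>t\<in>UNIV. (\<nu> t - sum \<nu> UNIV / CARD('a))^2) \<le> C"
  shows "min (CARD('a) / 2) ((sum \<nu> UNIV)^2 / (2 * C)) \<le> card T"
proof -
  define N where "N = sum \<nu> UNIV"
  define q where "q = real CARD('a)"
  have "q > 0" by (simp add: q_def)
  have "(\<Sum>t\<in>UNIV. (\<nu> t - N / q)^2) = (\<Sum>t\<in>UNIV. (\<nu> t)^2) - 2 * (N / q) * N + q * (N / q)^2"
    by (simp add: N_def q_def power2_diff sum.distrib sum_subtractf sum_divide_distrib[symmetric]
        sum_distrib_left[symmetric] sum_distrib_right[symmetric] mult.commute[of _ "sum \<nu> UNIV"])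
  also have "\<dots> = (\<Sum>t\<in>UNIV. (\<nu> t)^2) - N^2 / q"
    using \<open>q > 0\<close> by (simp add: power2_eq_square)
  finally have second_moment: "(\<Sum>t\<in>UNIV. (\<nu> t)^2) \<le> C + N^2 / q"
    using variance by (simp add: N_def q_def)
  have "N = sum \<nu> T"
    unfolding N_def using support by (intro sum.mono_neutral_right) auto
  then have "N^2 \<le> (\<Sum>t\<in>T. (\<nu> t)^2) * card T"
    using sum_squared_le_sum_of_squares by metis
  also have "\<dots> \<le> (\<Sum>t\<in>UNIV. (\<nu> t)^2) * card T"
    by (intro mult_right_mono sum_mono2) auto
  also have "\<dots> \<le> (C + N^2 / q) * card T"
    using second_moment by (rule mult_right_mono) simp
  finally have "N^2 \<le> (C + N^2 / q) * card T" .
  show ?thesis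
  proof (cases "card T < q / 2")
    case True
    have "N^2 / q * card T \<le> N^2 / q * (q / 2)"
      using True by (intro mult_left_mono) auto
    then have "N^2 / q * card T \<le> N^2 / 2"
      using \<open>q > 0\<close> by simp
    with \<open>N^2 \<le> (C + N^2 / q) * card T\<close> have "N^2 / 2 \<le> C * card T"
      by (simp only: distrib_right)
    then have "N^2 / (2 * C) \<le> card T"
      by (cases "C > 0") (auto simp: field_simps intro: order.trans[OF divide_nonneg_nonpos])
    then show ?thesis by (simp add: N_def)
  qed (simp add: q_def)
qed

lemma card_cube_powr:
  assumes "A \<noteq> {}"
  shows "real (card (cube A :: ('a::finite^'n::finite) set)) powr (1 - 1 / CARD('n))
       = real (card A) ^ (CARD('n) - 1)"
proof -
  have "real (card A) > 0" using assms by (simp add: card_gt_0_iff)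
  moreover have "real CARD('n) * (1 - 1 / CARD('n)) = real (CARD('n) - 1)"
    by (simp add: field_simps of_nat_diff)
  ultimately show ?thesis
    by (simp add: card_cube powr_realpow[symmetric] powr_powr)
qed

theorem mainTheorem4:
  fixes A :: "'a::{field,finite} set"
    and F :: "('a ^ 'n) set"
  assumes char: "(2::'a) \<noteq> 0"
    and d: "CARD('n) \<ge> 2"
    and A: "A \<noteq> {}"
    and F: "F \<noteq> {}"
  shows "real (card (dist_set (cube A :: ('a ^ 'n) set) F)) \<ge>
    min (real CARD('a) / 2)
        (real (card (cube A :: ('a ^ 'n) set)) powr (1 - 1 / real CARD('n)) * real (card F)
           / (4 * real CARD('a) ^ (CARD('n) - 1)))"
proof -
  \<comment> \<open>The argument only needs CARD('n) \<ge> 1.\<close>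
  define \<nu> where "\<nu> t = real (dist_count (cube A :: ('a^'n) set) F t)" for t
  define K where "K = 2 * real (card F) * real (card A) ^ (CARD('n) + 1) * real CARD('a) ^ (CARD('n) - 1)"
  have total: "sum \<nu> UNIV = real (card A ^ CARD('n) * card F)"
    unfolding \<nu>_def by (simp add: sum_dist_count card_cube flip: of_nat_sum)
  have "min (CARD('a) / 2) ((sum \<nu> UNIV)^2 / (2 * K)) \<le> card (dist_set (cube A :: ('a^'n) set) F)"
  proof (rule card_support_ge)
    show "\<nu> t = 0" if "t \<notin> dist_set (cube A) F" for t
      using that by (simp add: \<nu>_def dist_count_eq_0)
    show "(\<Sum>t\<in>UNIV. (\<nu> t - sum \<nu> UNIV / CARD('a))^2) \<le> K"
      using dist_count_variance_le[OF char A, of F] unfolding total K_def by (simp add: \<nu>_def card_cube)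
  qed
  moreover have "(sum \<nu> UNIV)^2 / (2 * K)
      = real (card A) ^ (CARD('n) - 1) * real (card F) / (4 * real CARD('a) ^ (CARD('n) - 1))"
  proof -
    obtain e where e: "CARD('n) = Suc e"
      using not0_implies_Suc by fastforce
    show ?thesis
      using A F by (simp add: K_def total e power2_eq_square field_simps)
  qed
  ultimately show ?thesis
    by (simp add: card_cube_powr[OF A])
qed

end
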